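(* Let $H$ be a hypergraph and $K$ a field, and let $f_{\mathcal E}\in I_H$ be the binomial arising from a balanced edge set $\mathcal E$ with $\operatorname{supp}(\mathcal E)\subseteq E(H)$ and $n=|\mathcal E_{blue}|\ge|\mathcal E_{red}|$. Then $f_{\mathcal E}$ is a linear combination, with coefficients in $K[t_e : e\in E(H)]$, of binomials in $I_H$ of degree less than $n$, provided one of the following two conditions holds: (i) there exists a proper splitting set $S$ of $\mathcal E$ with decomposition $(\Gamma_1,S,\Gamma_2)$ (with respect to which $S$ is proper) such that $|\Gamma_{i,blue}|<n$ and $|\Gamma_{i,red}|<n$ for $i=1,2$; or (ii) there is a blue splitting set $S$ of $\mathcal E$ with decomposition $(\Gamma_1,S,\Gamma_2)$ and a red splitting set $R$ of $\mathcal E$ with decomposition $(\Upsilon_1,R,\Upsilon_2)$, both of size less than $n$, such that $|\Gamma_{1,blue}|<n$, $|\Upsilon_{2,red}|<n$, $|\Gamma_{2,blue}|\le n$, $|\Upsilon_{1,red}|\le n$, and $S\cap R\neq\emptyset$.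
   Context: A hypergraph $H$ has vertex set $V=\{1,\dots,m\}$ and a set $E(H)$ of edges, each a nonempty subset of $V$ (no repeated edges); edges may have different sizes. The toric ideal $I_H$ is the kernel of $\phi_H: K[t_e : e\in E(H)]\to K[x_1,\dots,x_m]$, $t_e\mapsto\prod_{j\in e}x_j$. The degree of a binomial $u-v$ is the larger of the degrees of its monomials $u$, $v$. Multisets of edges: $|M|$ is the size with multiplicity; $\operatorname{supp}(M)$ the set of distinct elements; $\sqcup$ adds multiplicities; $\cap$ takes minimum multiplicities; $\subseteq$ is multiplicity-wise containment, and a proper submultiset is a contained, unequal one. A balanced edge set $\mathcal E$ is a pair of finite multisets $\mathcal E_{blue},\mathcal E_{red}$ of edges such that every vertex lies in the same number of blue as red edges, counted with multiplicity; $\operatorname{supp}(\mathcal E)=\operatorname{supp}(\mathcal E_{blue}\sqcup\mathcal E_{red})$; $f_{\mathcal E}=\prod_{e\in\mathcal E_{blue}}t_e-\prod_{e\in\mathcal E_{red}}t_e$ (with multiplicity). A balanced edge set $\mathcal F$ is reducible with separator $S$ and decomposition $(\Gamma_1,S,\Gamma_2)$ if $S$ is a nonempty multiset with $\operatorname{supp}(S)\subseteq\operatorname{supp}(\mathcal F)$ and there are balanced edge sets $\Gamma_1\neq\mathcal F$, $\Gamma_2\neq\mathcal F$ with $S=\Gamma_{1,red}\cap\Gamma_{2,blue}$, $\mathcal F_{blue}\sqcup\mathcal F_{red}=\Gamma_{1,blue}\sqcup\Gamma_{1,red}\sqcup\Gamma_{2,blue}\sqcup\Gamma_{2,red}$,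 $\Gamma_{1,red},\Gamma_{2,red}\subseteq\mathcal F_{red}$ and $\Gamma_{1,blue},\Gamma_{2,blue}\subseteq\mathcal F_{blue}$. $S$ is proper with respect to $(\Gamma_1,S,\Gamma_2)$ if $S$ is a proper submultiset of both $\Gamma_{1,red}$ and $\Gamma_{2,blue}$; if not proper, it is blue with respect to the decomposition if $\Gamma_{1,red}=S$ and red if $\Gamma_{2,blue}=S$. For a multiset $S$ of edges, $\mathcal E+S$ has blue part $\mathcal E_{blue}\sqcup S$ and red part $\mathcal E_{red}\sqcup S$. A nonempty multiset $S$ with $\operatorname{supp}(S)\subseteq E(H)$ is a splitting set of $\mathcal E$ with decomposition $(\Gamma_1,S,\Gamma_2)$ if $\mathcal E+S$ is reducible with separator $S$ and that decomposition; it is a blue (resp. red) splitting set with respect to the decomposition if $S$ is a blue (resp. red) separator of $\mathcal E+S$ with respect to it; it is proper if there is a decomposition with respect to which $S$ is a proper separator. *)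

theory Defs
  imports "HOL-Library.Multiset" "HOL-Library.Poly_Mapping"
begin

type_synonym edge = "nat set"

definition hypergraph :: "nat \<Rightarrow> edge set \<Rightarrow> bool" where
  "hypergraph m EH \<longleftrightarrow> (\<forall>e\<in>EH. e \<noteq> {} \<and> e \<subseteq> {1..m})"

text \<open>Polynomials in K[t_e : e an edge]: a monomial is a multiset of edges
  (exponents = multiplicities).  Polynomials in x_1..x_m: monomials are multisets of vertices.\<close>

type_synonym 'k tpoly = "edge multiset \<Rightarrow>\<^sub>0 'k"
type_synonym 'k xpoly = "nat multiset \<Rightarrow>\<^sub>0 'k"

definition tmon :: "edge multiset \<Rightarrow> 'k::comm_ring_1 tpoly" where
  "tmon M = Poly_Mapping.single M 1"

definition poly_ring :: "edge set \<Rightarrow> ('k::comm_ring_1) tpoly set" where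
  "poly_ring EH = {p. \<forall>M\<in>Poly_Mapping.keys p. set_mset M \<subseteq> EH}"

text \<open>Image of the monomial prod_{e in M} t_e under phi_H: prod_{e in M} prod_{j in e} x_j.\<close>
definition vmon :: "edge multiset \<Rightarrow> nat multiset" where
  "vmon M = (\<Sum>e\<in>#M. mset_set e)"

definition phi :: "('k::comm_ring_1) tpoly \<Rightarrow> 'k xpoly" where
  "phi p = (\<Sum>M\<in>Poly_Mapping.keys p. Poly_Mapping.single (vmon M) (Poly_Mapping.lookup p M))"

definition toric_ideal :: "edge set \<Rightarrow> ('k::comm_ring_1) tpoly set" where
  "toric_ideal EH = {p \<in> poly_ring EH. phi p = 0}"

definition low_binomials :: "edge set \<Rightarrow> nat \<Rightarrow> ('k::comm_ring_1) tpoly set" where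
  "low_binomials EH n = {g. \<exists>A B. g = tmon A - tmon B \<and> g \<in> toric_ideal EH
                              \<and> max (size A) (size B) < n}"

text \<open>Balanced edge sets: pairs (blue, red) of multisets of edges.\<close>
type_synonym bes = "edge multiset \<times> edge multiset"

abbreviation blue :: "bes \<Rightarrow> edge multiset" where "blue \<equiv> fst"
abbreviation red :: "bes \<Rightarrow> edge multiset" where "red \<equiv> snd"

definition balanced :: "bes \<Rightarrow> bool" where
  "balanced \<E> \<longleftrightarrow> (\<forall>v. size (filter_mset (\<lambda>e. v \<in> e) (blue \<E>))
                        = size (filter_mset (\<lambda>e. v \<in> e) (red \<E>)))"

definition bsupp :: "bes \<Rightarrow> edge set" where
  "bsupp \<E> = set_mset (blue \<E> + red \<E>)"

definition fE :: "bes \<Rightarrow> ('k::comm_ring_1) tpoly" where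
  "fE \<E> = tmon (blue \<E>) - tmon (red \<E>)"

definition reducible :: "bes \<Rightarrow> edge multiset \<Rightarrow> bes \<Rightarrow> bes \<Rightarrow> bool" where
  "reducible F S G1 G2 \<longleftrightarrow>
     S \<noteq> {#} \<and> set_mset S \<subseteq> bsupp F \<and>
     balanced G1 \<and> balanced G2 \<and> G1 \<noteq> F \<and> G2 \<noteq> F \<and>
     S = red G1 \<inter># blue G2 \<and>
     blue F + red F = blue G1 + red G1 + blue G2 + red G2 \<and>
     red G1 \<subseteq># red F \<and> red G2 \<subseteq># red F \<and>
     blue G1 \<subseteq># blue F \<and> blue G2 \<subseteq># blue F"

definition proper_sep :: "edge multiset \<Rightarrow> bes \<Rightarrow> bes \<Rightarrow> bool" where
  "proper_sep S G1 G2 \<longleftrightarrow> S \<subset># red G1 \<and> S \<subset># blue G2"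

definition blue_sep :: "edge multiset \<Rightarrow> bes \<Rightarrow> bes \<Rightarrow> bool" where
  "blue_sep S G1 G2 \<longleftrightarrow> \<not> proper_sep S G1 G2 \<and> red G1 = S"

definition red_sep :: "edge multiset \<Rightarrow> bes \<Rightarrow> bes \<Rightarrow> bool" where
  "red_sep S G1 G2 \<longleftrightarrow> \<not> proper_sep S G1 G2 \<and> blue G2 = S"

definition add_set :: "bes \<Rightarrow> edge multiset \<Rightarrow> bes" where
  "add_set \<E> S = (blue \<E> + S, red \<E> + S)"

definition splitting :: "edge set \<Rightarrow> bes \<Rightarrow> edge multiset \<Rightarrow> bes \<Rightarrow> bes \<Rightarrow> bool" where
  "splitting EH \<E> S G1 G2 \<longleftrightarrow>
     S \<noteq> {#} \<and> set_mset S \<subseteq> EH \<and> reducible (add_set \<E> S) S G1 G2"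

definition blue_splitting :: "edge set \<Rightarrow> bes \<Rightarrow> edge multiset \<Rightarrow> bes \<Rightarrow> bes \<Rightarrow> bool" where
  "blue_splitting EH \<E> S G1 G2 \<longleftrightarrow> splitting EH \<E> S G1 G2 \<and> blue_sep S G1 G2"

definition red_splitting :: "edge set \<Rightarrow> bes \<Rightarrow> edge multiset \<Rightarrow> bes \<Rightarrow> bes \<Rightarrow> bool" where
  "red_splitting EH \<E> S G1 G2 \<longleftrightarrow> splitting EH \<E> S G1 G2 \<and> red_sep S G1 G2"

definition lin_comb_low :: "edge set \<Rightarrow> nat \<Rightarrow> ('k::comm_ring_1) tpoly \<Rightarrow> bool" where
  "lin_comb_low EH n f \<longleftrightarrow>
     (\<exists>cs :: ('k tpoly \<times> 'k tpoly) list.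
        (\<forall>(c, g)\<in>set cs. c \<in> poly_ring EH \<and> g \<in> low_binomials EH n) \<and>
        f = (\<Sum>(c, g)\<leftarrow>cs. c * g))"

end

theory Submission
  imports Defs
begin

text \<open>
  Call a polynomial low if it is a combination of binomials of I_H of degree < n.  A balanced
  binomial t^(C+A) - t^(C+B) of degree \<le> n with a common factor t^C \<noteq> 1 is low.  Hence f_E is low
  as soon as E contains a nonempty balanced subpair (Y, X) \<noteq> E, since then f_E telescopes through
  t^(blue E - Y + X).  Consequently, unless f_E is low, the only balanced regroupings (U, W) of the
  edges of E are E and its swap.

  Cancelling the separator S from both sides of a decomposition (\<Gamma>1, S, \<Gamma>2) of E + S yields such
  a regrouping, namely (blue \<Gamma>1 + (blue \<Gamma>2 - S), (red \<Gamma>1 - S) + red \<Gamma>2).  In case (i) its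
  binomial is a combination of f_\<Gamma>1 and f_\<Gamma>2, so \<plusminus>f_E is low.  In case (ii) the swapped
  regroupings would force blue E \<subseteq> S resp. blue E \<subseteq> R, which is too large; so both regroupings are
  E itself and f_E telescopes through t^(blue \<Gamma>2) and t^(red \<Upsilon>1), the middle step having a
  common edge from S \<inter> R.
\<close>

definition vdeg :: "edge multiset \<Rightarrow> nat \<Rightarrow> nat" where
  "vdeg M v = size {#e \<in># M. v \<in> e#}"

lemma vdeg_add [simp]: "vdeg (A + B) v = vdeg A v + vdeg B v"
  by (simp add: vdeg_def)

lemma vdeg_diff: "B \<subseteq># A \<Longrightarrow> vdeg (A - B) v = vdeg A v - vdeg B v"
  by (simp add: vdeg_def size_Diff_submset multiset_filter_mono)

lemma balanced_iff_vdeg: "balanced E \<longleftrightarrow> (\<forall>v. vdeg (blue E) v = vdeg (red E) v)"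
  by (simp add: balanced_def vdeg_def)

lemma balanced_refl: "balanced (A, A)"
  by (simp add: balanced_def)

lemma balanced_swap: "balanced (A, B) \<Longrightarrow> balanced (B, A)"
  by (simp add: balanced_def)

lemma balanced_trans: "balanced (A, B) \<Longrightarrow> balanced (B, C) \<Longrightarrow> balanced (A, C)"
  by (simp add: balanced_def)

lemma balanced_add: "balanced (A, B) \<Longrightarrow> balanced (C, D) \<Longrightarrow> balanced (A + C, B + D)"
  by (simp add: balanced_iff_vdeg)

lemma balanced_diff:
  "balanced (A, B) \<Longrightarrow> balanced (C, D) \<Longrightarrow> C \<subseteq># A \<Longrightarrow> D \<subseteq># B \<Longrightarrow> balanced (A - C, B - D)"
  by (simp add: balanced_iff_vdeg vdeg_diff)

lemma balanced_empty_imp_empty: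
  assumes "\<forall>e\<in>#A. e \<noteq> {}" and "balanced (A, {#})"
  shows "A = {#}"
proof (rule ccontr)
  assume "A \<noteq> {#}"
  then obtain e v where "e \<in># A" "v \<in> e"
    using assms(1) by (metis all_not_in_conv multiset_nonemptyE)
  then have "vdeg A v \<noteq> 0"
    by (auto simp: vdeg_def filter_mset_eq_conv)
  with assms(2) show False
    by (simp add: balanced_iff_vdeg vdeg_def)
qed

lemma hypergraph_edges: "hypergraph m EH \<Longrightarrow> e \<in> EH \<Longrightarrow> e \<noteq> {} \<and> finite e"
  unfolding hypergraph_def by (metis finite_atLeastAtMost finite_subset)

lemma mset_subset_eq_add_disjoint_cancel:
  assumes "A \<subseteq># B + C" and "set_mset A \<inter> set_mset B = {}"
  shows "A \<subseteq># C"
  unfolding subseteq_mset_def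
proof
  fix x
  show "count A x \<le> count C x"
  proof (cases "x \<in># A")
    case True
    with assms(2) have "count B x = 0" by (auto simp: not_in_iff)
    with assms(1) show ?thesis by (metis add_0 count_union mset_subset_eq_count)
  qed (simp add: not_in_iff)
qed

lemma tmon_add: "(tmon (A + B) :: 'k::comm_ring_1 tpoly) = tmon A * tmon B"
  by (simp add: tmon_def mult_single)

lemma tmon_in_poly_ring: "set_mset A \<subseteq> EH \<Longrightarrow> (tmon A :: 'k::comm_ring_1 tpoly) \<in> poly_ring EH"
  by (simp add: tmon_def poly_ring_def)

lemma uminus_in_poly_ring: "(c :: 'k::comm_ring_1 tpoly) \<in> poly_ring EH \<Longrightarrow> - c \<in> poly_ring EH"
  by (simp add: poly_ring_def)

lemma binomial_in_poly_ring:
  "set_mset A \<subseteq> EH \<Longrightarrow> set_mset B \<subseteq> EH \<Longrightarrow> (tmon A - tmon B :: 'k::comm_ring_1 tpoly) \<in> poly_ring EH"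
  using keys_diff[of "tmon A :: 'k tpoly" "tmon B"]
  by (auto simp: poly_ring_def tmon_def split: if_splits)

lemma phi_eq_sum:
  assumes "Poly_Mapping.keys p \<subseteq> K" and "finite K"
  shows "phi p = (\<Sum>M\<in>K. Poly_Mapping.single (vmon M) (Poly_Mapping.lookup p M))"
  unfolding phi_def using assms
  by (intro sum.mono_neutral_left) (auto simp: in_keys_iff)

lemma phi_binomial:
  assumes "vmon A = vmon B"
  shows "phi (tmon A - tmon B :: 'k::comm_ring_1 tpoly) = 0"
proof (cases "A = B")
  case True
  then show ?thesis by (simp add: phi_def)
next
  case False
  let ?p = "tmon A - tmon B :: 'k tpoly"
  have "Poly_Mapping.keys ?p \<subseteq> {A, B}"
    using keys_diff[of "tmon A :: 'k tpoly" "tmon B"] by (auto simp: tmon_def split: if_splits)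
  then have "phi ?p = Poly_Mapping.single (vmon A) (Poly_Mapping.lookup ?p A + Poly_Mapping.lookup ?p B)"
    using False assms by (simp add: phi_eq_sum single_add)
  also have "Poly_Mapping.lookup ?p A + Poly_Mapping.lookup ?p B = 0"
    using False by (simp add: tmon_def lookup_minus lookup_single)
  finally show ?thesis by simp
qed

lemma count_vmon: "\<forall>e\<in>#M. finite e \<Longrightarrow> count (vmon M) v = vdeg M v"
  by (induction M) (simp_all add: vmon_def vdeg_def count_mset_set')

lemma vmon_eq_if_balanced:
  "\<forall>e\<in>#A + B. finite e \<Longrightarrow> balanced (A, B) \<Longrightarrow> vmon A = vmon B"
  by (simp add: multiset_eq_iff count_vmon balanced_iff_vdeg)

lemma binomial_in_low_binomials:
  assumes "\<forall>e\<in>EH. finite e" and "balanced (A, B)"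
    and "set_mset A \<subseteq> EH" and "set_mset B \<subseteq> EH" and "size A < n" and "size B < n"
  shows "(tmon A - tmon B :: 'k::comm_ring_1 tpoly) \<in> low_binomials EH n"
proof -
  have "vmon A = vmon B"
    using assms(1-4) by (intro vmon_eq_if_balanced) auto
  then have "(tmon A - tmon B :: 'k tpoly) \<in> toric_ideal EH"
    using assms(3,4) by (simp add: toric_ideal_def binomial_in_poly_ring phi_binomial)
  with assms(5,6) show ?thesis
    unfolding low_binomials_def by auto
qed

lemma lin_comb_low_mult:
  "c \<in> poly_ring EH \<Longrightarrow> g \<in> low_binomials EH n \<Longrightarrow> lin_comb_low EH n (c * g :: 'k::comm_ring_1 tpoly)"
  unfolding lin_comb_low_def by (rule exI[of _ "[(c, g)]"]) simp

lemma lin_comb_low_add: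
  assumes "lin_comb_low EH n (f :: 'k::comm_ring_1 tpoly)" and "lin_comb_low EH n g"
  shows "lin_comb_low EH n (f + g)"
proof -
  obtain cs where cs: "\<forall>(c, g)\<in>set cs. c \<in> poly_ring EH \<and> g \<in> low_binomials EH n"
    "f = (\<Sum>(c, g)\<leftarrow>cs. c * g)" using assms(1) unfolding lin_comb_low_def by blast
  obtain ds where ds: "\<forall>(c, g)\<in>set ds. c \<in> poly_ring EH \<and> g \<in> low_binomials EH n"
    "g = (\<Sum>(c, g)\<leftarrow>ds. c * g)" using assms(2) unfolding lin_comb_low_def by blast
  show ?thesis
    unfolding lin_comb_low_def by (rule exI[of _ "cs @ ds"]) (use cs ds in auto)
qed

lemma lin_comb_low_uminus:
  assumes "lin_comb_low EH n (f :: 'k::comm_ring_1 tpoly)"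
  shows "lin_comb_low EH n (- f)"
proof -
  obtain cs where cs: "\<forall>(c, g)\<in>set cs. c \<in> poly_ring EH \<and> g \<in> low_binomials EH n"
    "f = (\<Sum>(c, g)\<leftarrow>cs. c * g)" using assms unfolding lin_comb_low_def by blast
  let ?ds = "map (\<lambda>(c, g). (- c, g)) cs"
  have "- f = (\<Sum>(c, g)\<leftarrow>?ds. c * g)"
    unfolding cs(2) by (induction cs) auto
  moreover have "\<forall>(c, g)\<in>set ?ds. c \<in> poly_ring EH \<and> g \<in> low_binomials EH n"
    using cs(1) by (auto simp: uminus_in_poly_ring)
  ultimately show ?thesis unfolding lin_comb_low_def by blast
qed

lemma lin_comb_low_trans:
  assumes "lin_comb_low EH n (tmon A - tmon B :: 'k::comm_ring_1 tpoly)"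
    and "lin_comb_low EH n (tmon B - tmon C :: 'k tpoly)"
  shows "lin_comb_low EH n (tmon A - tmon C :: 'k tpoly)"
  using lin_comb_low_add[OF assms] by simp

lemma lin_comb_low_common_factor:
  assumes "\<forall>e\<in>EH. finite e" and "balanced (A, B)"
    and "set_mset (C + A) \<subseteq> EH" and "set_mset (C + B) \<subseteq> EH" and "size A < n" and "size B < n"
  shows "lin_comb_low EH n (tmon (C + A) - tmon (C + B) :: 'k::comm_ring_1 tpoly)"
proof -
  have "lin_comb_low EH n (tmon C * (tmon A - tmon B) :: 'k tpoly)"
    using assms by (intro lin_comb_low_mult tmon_in_poly_ring binomial_in_low_binomials) auto
  then show ?thesis by (simp add: tmon_add right_diff_distrib)
qed

lemma lin_comb_low_common_edge:
  assumes "\<forall>e\<in>EH. finite e" and "balanced (A, B)" and "e \<in># A" and "e \<in># B"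
    and "set_mset A \<subseteq> EH" and "set_mset B \<subseteq> EH" and "size A \<le> n" and "size B \<le> n"
  shows "lin_comb_low EH n (tmon A - tmon B :: 'k::comm_ring_1 tpoly)"
proof -
  have "balanced (A - {#e#}, B - {#e#})"
    using assms(2-4) by (simp add: balanced_diff balanced_refl)
  moreover have "size (A - {#e#}) < n" "size (B - {#e#}) < n"
    using assms(3,4,7,8) by (auto dest!: multi_member_split)
  moreover have "set_mset ({#e#} + (A - {#e#})) \<subseteq> EH" "set_mset ({#e#} + (B - {#e#})) \<subseteq> EH"
    using assms(3-6) by (auto dest: in_diffD)
  ultimately have "lin_comb_low EH n (tmon ({#e#} + (A - {#e#})) - tmon ({#e#} + (B - {#e#})) :: 'k tpoly)"
    using assms(1) by (intro lin_comb_low_common_factor) auto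
  then show ?thesis
    using assms(3,4) by simp
qed

lemma splitting_parts_in_edges:
  assumes "splitting EH E S G1 G2" and "bsupp E \<subseteq> EH"
  shows "set_mset (blue G1 + red G1 + blue G2 + red G2) \<subseteq> EH"
proof -
  have "blue E + S + (red E + S) = blue G1 + red G1 + blue G2 + red G2"
    using assms(1) unfolding splitting_def reducible_def add_set_def prod.sel by blast
  then have "set_mset (blue G1 + red G1 + blue G2 + red G2) = set_mset (blue E + S + (red E + S))"
    by simp
  then show ?thesis
    using assms by (auto simp: splitting_def bsupp_def)
qed

lemma splitting_separator_subset:
  assumes "splitting EH E S G1 G2"
  shows "S \<subseteq># red G1" and "S \<subseteq># blue G2"
  using assms unfolding splitting_def reducible_def by auto

lemma splitting_parts_balanced:
  assumes "splitting EH E S G1 G2"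
  shows "balanced (blue G1, red G1)" and "balanced (blue G2, red G2)"
  using assms unfolding splitting_def reducible_def by auto

lemma splitting_parts_subset:
  assumes "splitting EH E S G1 G2"
  shows "blue G1 \<subseteq># blue E + S" "blue G2 \<subseteq># blue E + S"
    and "red G1 \<subseteq># red E + S" "red G2 \<subseteq># red E + S"
  using assms unfolding splitting_def reducible_def add_set_def prod.sel by blast+

lemma splitting_regrouping:
  assumes "splitting EH E S G1 G2"
  shows "blue G1 + (blue G2 - S) + (red G1 - S + red G2) = blue E + red E"
    and "balanced (blue G1 + (blue G2 - S), red G1 - S + red G2)"
proof -
  note S = splitting_separator_subset[OF assms] and bal = splitting_parts_balanced[OF assms]
  have sum: "blue E + S + (red E + S) = blue G1 + red G1 + blue G2 + red G2"
    using assms unfolding splitting_def reducible_def add_set_def prod.sel by blast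
  show "blue G1 + (blue G2 - S) + (red G1 - S + red G2) = blue E + red E"
  proof (rule multiset_eqI)
    fix x
    have "count S x \<le> count (red G1) x" "count S x \<le> count (blue G2) x"
      using S by (simp_all add: mset_subset_eq_count)
    moreover have "count (blue E) x + count S x + (count (red E) x + count S x)
        = count (blue G1) x + count (red G1) x + count (blue G2) x + count (red G2) x"
      using arg_cong[OF sum, of "\<lambda>M. count M x"] by simp
    ultimately show "count (blue G1 + (blue G2 - S) + (red G1 - S + red G2)) x = count (blue E + red E) x"
      by simp
  qed
  have "balanced (blue G1 + blue G2, red G1 + red G2)"
    using bal by (rule balanced_add)
  moreover have "S \<subseteq># blue G1 + blue G2" "S \<subseteq># red G1 + red G2"
    using S by (meson mset_subset_eq_add_left mset_subset_eq_add_right subset_mset.order_trans)+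
  ultimately have "balanced (blue G1 + blue G2 - S, red G1 + red G2 - S)"
    using balanced_diff[OF _ balanced_refl] by blast
  moreover have "blue G1 + blue G2 - S = blue G1 + (blue G2 - S)"
    by (rule multiset_diff_union_assoc[OF S(2)])
  moreover have "red G1 + red G2 - S = red G1 - S + red G2"
    by (rule subset_mset.diff_add_assoc2[OF S(1)])
  ultimately show "balanced (blue G1 + (blue G2 - S), red G1 - S + red G2)"
    by simp
qed

locale bounded_balanced_edge_set =
  fixes EH :: "edge set" and E :: bes and n :: nat
  assumes edges_nonempty: "\<forall>e\<in>EH. e \<noteq> {}"
    and edges_finite: "\<forall>e\<in>EH. finite e"
    and balanced_E: "balanced E"
    and supp_in_edges: "bsupp E \<subseteq> EH"
    and size_blue_le: "size (blue E) \<le> n"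
    and size_red_le: "size (red E) \<le> n"
begin

lemma balanced_blue_red: "balanced (blue E, red E)"
  using balanced_E by simp

lemma blue_in_edges: "set_mset (blue E) \<subseteq> EH"
  and red_in_edges: "set_mset (red E) \<subseteq> EH"
  using supp_in_edges by (auto simp: bsupp_def)

lemma fE_eq: "fE E = tmon (blue E) - tmon (red E)"
  by (simp add: fE_def)

lemma balanced_empty_in_edges:
  "set_mset A \<subseteq> EH \<Longrightarrow> balanced (A, {#}) \<Longrightarrow> A = {#}"
  using edges_nonempty balanced_empty_imp_empty by blast

lemma balanced_subpair_empty_iff:
  assumes "set_mset Y \<subseteq> EH" and "set_mset X \<subseteq> EH" and "balanced (Y, X)"
  shows "Y = {#} \<longleftrightarrow> X = {#}"
  using assms balanced_empty_in_edges balanced_swap by auto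

lemma balanced_subpair_full_iff:
  assumes Y: "Y \<subseteq># blue E" and X: "X \<subseteq># red E" and "balanced (Y, X)"
  shows "Y = blue E \<longleftrightarrow> X = red E"
proof -
  have "balanced (blue E - Y, red E - X)"
    using balanced_diff[OF balanced_blue_red assms(3) Y X] .
  moreover have "set_mset (blue E - Y) \<subseteq> EH" "set_mset (red E - X) \<subseteq> EH"
    using blue_in_edges red_in_edges by (auto dest: in_diffD)
  ultimately have "blue E - Y = {#} \<longleftrightarrow> red E - X = {#}"
    by (rule balanced_subpair_empty_iff[rotated 2])
  then show ?thesis
    using Y X by (auto simp: Diff_eq_empty_iff_mset subset_mset.antisym)
qed

lemma low_if_balanced_subpair:
  assumes Y: "Y \<subseteq># blue E" and X: "X \<subseteq># red E" and bal_YX: "balanced (Y, X)"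
    and "Y \<noteq> {#}" and "(Y, X) \<noteq> E"
  shows "lin_comb_low EH n (fE E :: 'k::comm_ring_1 tpoly)"
proof -
  define B where "B = blue E - Y"
  define R where "R = red E - X"
  have bal_BR: "balanced (B, R)"
    unfolding B_def R_def using balanced_diff[OF balanced_blue_red bal_YX Y X] .
  have in_edges: "set_mset B \<subseteq> EH" "set_mset R \<subseteq> EH" "set_mset Y \<subseteq> EH" "set_mset X \<subseteq> EH"
    using Y X blue_in_edges red_in_edges by (auto simp: B_def R_def dest: in_diffD mset_subset_eqD)
  have "X \<noteq> {#}"
    using \<open>Y \<noteq> {#}\<close> balanced_subpair_empty_iff[OF in_edges(3,4) bal_YX] by simp
  moreover have "Y \<noteq> blue E" "X \<noteq> red E"
    using balanced_subpair_full_iff[OF Y X bal_YX] \<open>(Y, X) \<noteq> E\<close> by auto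
  ultimately have sizes: "size Y < n" "size X < n" "size B < n" "size R < n"
    using Y X \<open>Y \<noteq> {#}\<close> size_blue_le size_red_le
    by (auto simp: B_def R_def size_Diff_submset nonempty_has_size
        dest!: subset_mset.le_neq_trans[THEN mset_subset_size])
  have "lin_comb_low EH n (tmon (B + Y) - tmon (B + X) :: 'k tpoly)"
    using edges_finite bal_YX in_edges sizes by (intro lin_comb_low_common_factor) auto
  moreover have "lin_comb_low EH n (tmon (X + B) - tmon (X + R) :: 'k tpoly)"
    using edges_finite bal_BR in_edges sizes by (intro lin_comb_low_common_factor) auto
  moreover have "blue E = B + Y" "red E = X + R"
    using Y X by (simp_all add: B_def R_def)
  ultimately show ?thesis
    unfolding fE_eq by (metis add.commute lin_comb_low_trans)
qed

lemma low_if_common_edge: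
  assumes "e \<in># blue E" and "e \<in># red E"
  shows "lin_comb_low EH n (fE E :: 'k::comm_ring_1 tpoly)"
  unfolding fE_eq using edges_finite balanced_blue_red assms blue_in_edges red_in_edges size_blue_le size_red_le
  by (rule lin_comb_low_common_edge)

lemma low_or_trivial_regrouping:
  assumes UW: "U + W = blue E + red E" and bal_UW: "balanced (U, W)"
  shows "lin_comb_low EH n (fE E :: 'k::comm_ring_1 tpoly) \<or> (U, W) = E \<or> (W, U) = E"
proof -
  define X where "X = U - blue E"
  define Y where "Y = blue E - U"
  have count_UW: "count U x + count W x = count (blue E) x + count (red E) x" for x
    using arg_cong[OF UW, of "\<lambda>M. count M x"] by simp
  have "count U x \<le> count (red E) x + count (blue E) x" for x
    using count_UW[of x] by linarith
  then have X: "X \<subseteq># red E"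
    unfolding X_def subseteq_mset_def by (simp add: le_diff_conv)
  have U_Y: "U + Y = blue E + X"
  proof (rule multiset_eqI)
    fix x
    show "count (U + Y) x = count (blue E + X) x"
      by (simp add: X_def Y_def)
  qed
  have W_X: "W + X = red E + Y"
  proof (rule multiset_eqI)
    fix x
    show "count (W + X) x = count (red E + Y) x"
      using count_UW[of x] by (simp add: X_def Y_def)
  qed
  have "balanced (Y, X)"
    unfolding balanced_iff_vdeg
  proof
    fix v
    have "vdeg U v + vdeg Y v = vdeg (blue E) v + vdeg X v"
      "vdeg W v + vdeg X v = vdeg (red E) v + vdeg Y v"
      using arg_cong[OF U_Y, of "\<lambda>M. vdeg M v"] arg_cong[OF W_X, of "\<lambda>M. vdeg M v"] by simp_all
    then show "vdeg (blue (Y, X)) v = vdeg (red (Y, X)) v"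
      using bal_UW balanced_E by (simp add: balanced_iff_vdeg)
  qed
  show ?thesis
  proof (cases "Y = {#}")
    case True
    have "set_mset X \<subseteq> EH"
      using X red_in_edges by (auto dest: mset_subset_eqD)
    then have "X = {#}"
      using \<open>balanced (Y, X)\<close> True balanced_empty_in_edges balanced_swap by blast
    with True U_Y UW show ?thesis by simp
  next
    case False
    have "Y \<subseteq># blue E" by (simp add: Y_def)
    with X False \<open>balanced (Y, X)\<close> have "lin_comb_low EH n (fE E :: 'k tpoly) \<or> (Y, X) = E"
      using low_if_balanced_subpair by blast
    moreover have "(W, U) = E" if "(Y, X) = E"
    proof -
      have "U + blue E = red E + blue E" "W + red E = blue E + red E"
        using U_Y W_X that by (auto simp: add.commute)
      then show ?thesis by simp
    qed
    ultimately show ?thesis by blast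
  qed
qed

lemma low_if_splitting_with_small_parts:
  assumes spl: "splitting EH E S G1 G2"
    and sizes: "size (blue G1) < n" "size (red G1) < n" "size (blue G2) < n" "size (red G2) < n"
  shows "lin_comb_low EH n (fE E :: 'k::comm_ring_1 tpoly)"
proof -
  define B where "B = blue G2 - S"
  define A where "A = red G1 - S"
  note S = splitting_separator_subset[OF spl] and bal = splitting_parts_balanced[OF spl]
  have parts: "set_mset (blue G1 + red G1 + blue G2 + red G2) \<subseteq> EH"
    using splitting_parts_in_edges[OF spl supp_in_edges] .
  then have "set_mset B \<subseteq> EH" "set_mset A \<subseteq> EH"
    by (auto simp: A_def B_def dest: in_diffD)
  then have "lin_comb_low EH n (tmon (B + blue G1) - tmon (B + red G1) :: 'k tpoly)"
    and "lin_comb_low EH n (tmon (A + blue G2) - tmon (A + red G2) :: 'k tpoly)"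
    using edges_finite bal parts sizes by (auto intro!: lin_comb_low_common_factor)
  moreover have "B + red G1 = A + blue G2"
    using S by (simp add: A_def B_def add_ac)
  ultimately have low_UW: "lin_comb_low EH n (tmon (blue G1 + B) - tmon (A + red G2) :: 'k tpoly)"
    by (metis add.commute lin_comb_low_trans)
  from splitting_regrouping[OF spl]
  have "lin_comb_low EH n (fE E :: 'k tpoly) \<or> (blue G1 + B, A + red G2) = E \<or> (A + red G2, blue G1 + B) = E"
    unfolding A_def B_def by (rule low_or_trivial_regrouping)
  then show ?thesis
    using low_UW lin_comb_low_uminus[OF low_UW] by (auto simp: fE_def)
qed

lemma blue_splitting_regrouping:
  assumes bs: "blue_splitting EH E S G1 G2" and small: "size S < size (blue E)"
  shows "lin_comb_low EH n (fE E :: 'k::comm_ring_1 tpoly) \<or> (blue G1 + (blue G2 - S), red G2) = E"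
proof -
  have spl: "splitting EH E S G1 G2" and "red G1 = S"
    using bs by (auto simp: blue_splitting_def blue_sep_def)
  then have "lin_comb_low EH n (fE E :: 'k tpoly) \<or> (blue G1 + (blue G2 - S), red G2) = E
      \<or> (red G2, blue G1 + (blue G2 - S)) = E"
    using low_or_trivial_regrouping[OF splitting_regrouping[OF spl]] by simp
  moreover have "lin_comb_low EH n (fE E :: 'k tpoly)" if "red G2 = blue E"
  proof (cases "set_mset (blue E) \<inter> set_mset (red E) = {}")
    case True
    have "blue E \<subseteq># red E + S"
      using splitting_parts_subset(4)[OF spl] that by simp
    then have "blue E \<subseteq># S"
      using True by (rule mset_subset_eq_add_disjoint_cancel)
    with small show ?thesis
      using size_mset_mono by fastforce
  next
    case False
    then show ?thesis using low_if_common_edge by blast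
  qed
  ultimately show ?thesis by auto
qed

lemma red_splitting_regrouping:
  assumes rs: "red_splitting EH E R U1 U2" and small: "size R < size (blue E)"
  shows "lin_comb_low EH n (fE E :: 'k::comm_ring_1 tpoly) \<or> (blue U1, red U1 - R + red U2) = E"
proof -
  have spl: "splitting EH E R U1 U2" and "blue U2 = R"
    using rs by (auto simp: red_splitting_def red_sep_def)
  then have "lin_comb_low EH n (fE E :: 'k tpoly) \<or> (blue U1, red U1 - R + red U2) = E
      \<or> (red U1 - R + red U2, blue U1) = E"
    using low_or_trivial_regrouping[OF splitting_regrouping[OF spl]] by simp
  moreover have "lin_comb_low EH n (fE E :: 'k tpoly)" if "red U1 - R + red U2 = blue E"
  proof (cases "set_mset (blue E) \<inter> set_mset (red E) = {}")
    case True
    have "red U1 - R \<subseteq># red E" "red U2 \<subseteq># red E + R"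
      using splitting_parts_subset[OF spl] by (simp_all add: subset_eq_diff_conv)
    then have "blue E \<subseteq># (red E + red E) + R"
      using subset_mset.add_mono that by (fastforce simp: add.assoc)
    moreover have "set_mset (blue E) \<inter> set_mset (red E + red E) = {}"
      using True by simp
    ultimately have "blue E \<subseteq># R"
      by (rule mset_subset_eq_add_disjoint_cancel)
    with small show ?thesis
      using size_mset_mono by fastforce
  next
    case False
    then show ?thesis using low_if_common_edge by blast
  qed
  ultimately show ?thesis by auto
qed

lemma low_if_blue_and_red_splitting:
  assumes bs: "blue_splitting EH E S G1 G2" and rs: "red_splitting EH E R U1 U2"
    and n: "n = size (blue E)"
    and sizes: "size S < n" "size R < n" "size (blue G1) < n" "size (red U2) < n"
      "size (blue G2) \<le> n" "size (red U1) \<le> n"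
    and common: "S \<inter># R \<noteq> {#}"
  shows "lin_comb_low EH n (fE E :: 'k::comm_ring_1 tpoly)"
proof (rule ccontr)
  assume not_low: "\<not> ?thesis"
  have blue_E: "blue E = blue G2 - S + blue G1" and red_G2: "red G2 = red E"
    using blue_splitting_regrouping[OF bs] not_low sizes(1) n by (auto simp: add.commute)
  have blue_U1: "blue U1 = blue E" and red_E: "red E = red U1 - R + red U2"
    using red_splitting_regrouping[OF rs] not_low sizes(2) n by auto
  have spl_S: "splitting EH E S G1 G2" and "red G1 = S"
    using bs by (auto simp: blue_splitting_def blue_sep_def)
  have spl_R: "splitting EH E R U1 U2" and "blue U2 = R"
    using rs by (auto simp: red_splitting_def red_sep_def)
  note S = splitting_separator_subset(2)[OF spl_S] and R = splitting_separator_subset(1)[OF spl_R]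
  note bal = splitting_parts_balanced[OF spl_S] splitting_parts_balanced[OF spl_R]
  have parts: "set_mset (blue G1 + red G1 + blue G2 + red G2) \<subseteq> EH"
    "set_mset (blue U1 + red U1 + blue U2 + red U2) \<subseteq> EH"
    using splitting_parts_in_edges spl_S spl_R supp_in_edges by blast+
  obtain e where "e \<in># S \<inter># R"
    using common by (meson multiset_nonemptyE)
  then have e: "e \<in># blue G2" "e \<in># red U1"
    using S R by (meson inter_iff mset_subset_eqD)+
  have "balanced (blue G2, red E)" "balanced (blue E, red U1)"
    using bal(2,3) by (simp_all add: red_G2 blue_U1)
  then have "balanced (blue G2, red U1)"
    by (meson balanced_swap balanced_blue_red balanced_trans)
  then have low_G2_U1: "lin_comb_low EH n (tmon (blue G2) - tmon (red U1) :: 'k tpoly)"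
    using edges_finite e parts sizes by (intro lin_comb_low_common_edge) auto
  have "lin_comb_low EH n (tmon (blue G2 - S + blue G1) - tmon (blue G2 - S + S) :: 'k tpoly)"
    using edges_finite bal(1) \<open>red G1 = S\<close> parts sizes by (intro lin_comb_low_common_factor) (auto dest: in_diffD)
  then have low_E_G2: "lin_comb_low EH n (tmon (blue E) - tmon (blue G2) :: 'k tpoly)"
    using S by (simp add: blue_E)
  have "lin_comb_low EH n (tmon (red U1 - R + R) - tmon (red U1 - R + red U2) :: 'k tpoly)"
    using edges_finite bal(4) \<open>blue U2 = R\<close> parts sizes by (intro lin_comb_low_common_factor) (auto dest: in_diffD)
  then have low_U1_E: "lin_comb_low EH n (tmon (red U1) - tmon (red E) :: 'k tpoly)"
    using R by (simp add: red_E)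
  have "lin_comb_low EH n (fE E :: 'k tpoly)"
    unfolding fE_eq by (rule lin_comb_low_trans[OF lin_comb_low_trans[OF low_E_G2 low_G2_U1] low_U1_E])
  with not_low show False ..
qed

end

theorem proposition5p3:
  fixes m :: nat and EH :: "edge set" and \<E> :: bes and n :: nat
  assumes "hypergraph m EH"
    and "balanced \<E>" and "bsupp \<E> \<subseteq> EH"
    and "n = size (blue \<E>)" and "size (blue \<E>) \<ge> size (red \<E>)"
    and "(\<exists>S G1 G2. splitting EH \<E> S G1 G2 \<and> proper_sep S G1 G2 \<and>
             size (blue G1) < n \<and> size (red G1) < n \<and>
             size (blue G2) < n \<and> size (red G2) < n)
       \<or> (\<exists>S G1 G2 R U1 U2. blue_splitting EH \<E> S G1 G2 \<and> red_splitting EH \<E> R U1 U2 \<and>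
             size S < n \<and> size R < n \<and>
             size (blue G1) < n \<and> size (red U2) < n \<and>
             size (blue G2) \<le> n \<and> size (red U1) \<le> n \<and>
             S \<inter># R \<noteq> {#})"
  shows "lin_comb_low EH n (fE \<E> :: 'k::field tpoly)"
proof -
  interpret bounded_balanced_edge_set EH \<E> n
    using assms(1-5) hypergraph_edges by unfold_locales auto
  from assms(6) show ?thesis
    by (elim disjE exE conjE)
      (blast intro: low_if_splitting_with_small_parts low_if_blue_and_red_splitting[OF _ _ assms(4)])+
qed

end
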